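(* Let $\mathcal H$ be a complex infinite-dimensional separable Hilbert space and let $H$ be a densely defined self-adjoint operator on $\mathcal H$ (so $H$ is affiliated with $\mathcal B(\mathcal H)$). Let $x\in\mathcal H$ be a unit vector. Then $x\in\mathcal H_{ac}(H)$ if and only if the rank one projection $x\otimes x$ is a norm absolutely continuous projection with respect to $H$ (in $\mathcal M=\mathcal B(\mathcal H)$).
   Context: $(x\otimes x)y=\langle y,x\rangle x$ for $y\in\mathcal H$. Let $\{E(\lambda)\}_{\lambda\in\mathbb R}$ be the spectral resolution of $H$. $\mathcal H_{ac}(H)$ is the set of $x\in\mathcal H$ for which $\lambda\mapsto\langle E(\lambda)x,x\rangle$ is locally absolutely continuous on $\mathbb R$. A projection $P\in\mathcal B(\mathcal H)$ is a norm absolutely continuous projection with respect to $H$ if $\lambda\mapsto PE(\lambda)P$ from $\mathbb R$ into $\mathcal B(\mathcal H)$ is locally absolutely continuous in operator norm (for all $a<b$, $\epsilon>0$ there is $\delta>0$ with $\sum_i\|PE(b_i)P-PE(a_i)P\|<\epsilon$ for every finite family of disjoint intervals $(a_i,b_i)\subseteq[a,b]$ with $\sum_i(b_i-a_i)<\delta$). *)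

theory Defs
  imports "HOL-Analysis.Analysis"
begin

text \<open>The separable infinite-dimensional complex Hilbert space is modelled concretely
  as l2(N): square-summable complex sequences.  Operators are functions on sequences,
  only their behaviour on l2 matters.\<close>

type_synonym vec = "nat \<Rightarrow> complex"
type_synonym op = "vec \<Rightarrow> vec"

definition l2 :: "vec set" where
  "l2 = {f. summable (\<lambda>n. (cmod (f n))\<^sup>2)}"

definition ip :: "vec \<Rightarrow> vec \<Rightarrow> complex" where
  "ip f g = (\<Sum>n. f n * cnj (g n))"

definition l2norm :: "vec \<Rightarrow> real" where
  "l2norm f = sqrt (\<Sum>n. (cmod (f n))\<^sup>2)"

definition bounded_op :: "op \<Rightarrow> bool" where
  "bounded_op T \<longleftrightarrow>
     (\<forall>f\<in>l2. T f \<in> l2) \<and>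
     (\<forall>f\<in>l2. \<forall>g\<in>l2. \<forall>a b. T (\<lambda>n. a * f n + b * g n) = (\<lambda>n. a * T f n + b * T g n)) \<and>
     (\<exists>C. \<forall>f\<in>l2. l2norm (T f) \<le> C * l2norm f)"

definition opnorm :: "op \<Rightarrow> real" where
  "opnorm T = Sup {l2norm (T f) | f. f \<in> l2 \<and> l2norm f \<le> 1}"

definition orth_proj :: "op \<Rightarrow> bool" where
  "orth_proj P \<longleftrightarrow> bounded_op P \<and> (\<forall>f\<in>l2. P (P f) = P f) \<and>
     (\<forall>f\<in>l2. \<forall>g\<in>l2. ip (P f) g = ip f (P g))"

text \<open>Spectral resolution (resolution of the identity) of a self-adjoint operator:
  increasing, strongly right-continuous family of orthogonal projections tending strongly
  to 0 at -infinity and to the identity at +infinity.  By the spectral theorem these are in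
  bijection with (densely defined) self-adjoint operators H.\<close>
definition spectral_resolution :: "(real \<Rightarrow> op) \<Rightarrow> bool" where
  "spectral_resolution E \<longleftrightarrow>
     (\<forall>s. orth_proj (E s)) \<and>
     (\<forall>s t. s \<le> t \<longrightarrow> (\<forall>f\<in>l2. E s (E t f) = E s f \<and> E t (E s f) = E s f)) \<and>
     (\<forall>s. \<forall>f\<in>l2. ((\<lambda>t. l2norm (\<lambda>n. E t f n - E s f n)) \<longlongrightarrow> 0) (at_right s)) \<and>
     (\<forall>f\<in>l2. ((\<lambda>t. l2norm (E t f)) \<longlongrightarrow> 0) at_bot) \<and>
     (\<forall>f\<in>l2. ((\<lambda>t. l2norm (\<lambda>n. E t f n - f n)) \<longlongrightarrow> 0) at_top)"

text \<open>Local absolute continuity, with respect to a "variation" D s t measuring the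
  increment over the interval (s,t) (|F t - F s| or a norm of a difference).\<close>
definition loc_abs_cont :: "(real \<Rightarrow> real \<Rightarrow> real) \<Rightarrow> bool" where
  "loc_abs_cont D \<longleftrightarrow>
     (\<forall>a b. a < b \<longrightarrow> (\<forall>\<epsilon>>0. \<exists>\<delta>>0. \<forall>(m::nat) (u::nat \<Rightarrow> real) v.
        (\<forall>i<m. a \<le> u i \<and> u i < v i \<and> v i \<le> b) \<and>
        (\<forall>i<m. \<forall>j<m. i \<noteq> j \<longrightarrow> v i \<le> u j \<or> v j \<le> u i) \<and>
        (\<Sum>i<m. v i - u i) < \<delta>
        \<longrightarrow> (\<Sum>i<m. D (u i) (v i)) < \<epsilon>))"

definition Hac :: "(real \<Rightarrow> op) \<Rightarrow> vec set" where
  "Hac E = {x \<in> l2. loc_abs_cont (\<lambda>s t. cmod (ip (E t x) x - ip (E s x) x))}"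

definition norm_ac_proj :: "(real \<Rightarrow> op) \<Rightarrow> op \<Rightarrow> bool" where
  "norm_ac_proj E P \<longleftrightarrow> orth_proj P \<and>
     loc_abs_cont (\<lambda>s t. opnorm (\<lambda>f n. P (E t (P f)) n - P (E s (P f)) n))"

definition rank_one :: "vec \<Rightarrow> op" where
  "rank_one x = (\<lambda>y n. ip y x * x n)"

end

theory Submission
  imports Defs
begin

text \<open>For a unit vector x the compression of E(\<lambda>) by x \<otimes> x is the scalar
  \<langle>E(\<lambda>)x,x\<rangle> times x \<otimes> x, and the operator norm of c (x \<otimes> x) is |c|.
  Hence the two variations in the definitions of H_ac and of norm absolute continuity coincide
  interval by interval.\<close>

lemma sum_norm_mult_le_l2norm:
  assumes "f \<in> l2" "g \<in> l2"
  shows "(\<Sum>i<n. cmod (f i) * cmod (g i)) \<le> l2norm f * l2norm g"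
proof -
  have partial_le: "(\<Sum>i<n. (cmod (h i))\<^sup>2) \<le> (\<Sum>i. (cmod (h i))\<^sup>2)" if "h \<in> l2" for h
    using that by (intro sum_le_suminf) (auto simp: l2_def)
  have "(\<Sum>i<n. cmod (f i) * cmod (g i))\<^sup>2 \<le> (\<Sum>i<n. (cmod (f i))\<^sup>2) * (\<Sum>i<n. (cmod (g i))\<^sup>2)"
    by (rule Cauchy_Schwarz_ineq_sum)
  also have "\<dots> \<le> (\<Sum>i. (cmod (f i))\<^sup>2) * (\<Sum>i. (cmod (g i))\<^sup>2)"
    using assms by (intro mult_mono partial_le sum_nonneg) (auto simp: l2_def suminf_nonneg)
  also have "\<dots> = (l2norm f * l2norm g)\<^sup>2"
    using assms by (simp add: l2norm_def l2_def power_mult_distrib suminf_nonneg)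
  finally show ?thesis
    by (rule power2_le_imp_le) (use assms in \<open>simp add: l2norm_def l2_def suminf_nonneg\<close>)
qed

lemma summable_norm_mult_l2:
  assumes "f \<in> l2" "g \<in> l2"
  shows "summable (\<lambda>n. cmod (f n * cnj (g n)))"
  using sum_norm_mult_le_l2norm[OF assms]
  by (intro summableI_nonneg_bounded) (simp_all add: norm_mult)

lemma summable_mult_l2:
  assumes "f \<in> l2" "g \<in> l2"
  shows "summable (\<lambda>n. f n * cnj (g n))"
  by (rule summable_norm_cancel[OF summable_norm_mult_l2[OF assms]])

lemma norm_ip_le:
  assumes "f \<in> l2" "g \<in> l2"
  shows "cmod (ip f g) \<le> l2norm f * l2norm g"
proof -
  have "cmod (ip f g) \<le> (\<Sum>n. cmod (f n * cnj (g n)))"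
    unfolding ip_def by (rule summable_norm[OF summable_norm_mult_l2[OF assms]])
  also have "\<dots> \<le> l2norm f * l2norm g"
    using summable_norm_mult_l2[OF assms] sum_norm_mult_le_l2norm[OF assms]
    by (intro suminf_le_const) (simp_all add: norm_mult)
  finally show ?thesis .
qed

lemma l2_scale: "f \<in> l2 \<Longrightarrow> (\<lambda>n. c * f n) \<in> l2"
  unfolding l2_def by (simp add: norm_mult power_mult_distrib summable_mult)

lemma l2norm_scale:
  assumes "f \<in> l2"
  shows "l2norm (\<lambda>n. c * f n) = cmod c * l2norm f"
  using assms unfolding l2norm_def l2_def
  by (simp add: norm_mult power_mult_distrib suminf_mult real_sqrt_mult)

lemma ip_scale_left:
  assumes "f \<in> l2" "g \<in> l2"
  shows "ip (\<lambda>n. c * f n) g = c * ip f g"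
  unfolding ip_def using suminf_mult[OF summable_mult_l2[OF assms], of c]
  by (simp add: mult.assoc)

lemma ip_linear_left:
  assumes "f \<in> l2" "g \<in> l2" "h \<in> l2"
  shows "ip (\<lambda>n. a * f n + b * g n) h = a * ip f h + b * ip g h"
proof -
  have "ip (\<lambda>n. a * f n + b * g n) h = (\<Sum>n. a * (f n * cnj (h n)) + b * (g n * cnj (h n)))"
    unfolding ip_def by (simp add: algebra_simps)
  also have "\<dots> = a * ip f h + b * ip g h"
    unfolding ip_def using summable_mult_l2[OF assms(1,3)] summable_mult_l2[OF assms(2,3)]
    by (simp add: suminf_add[symmetric] summable_mult suminf_mult)
  finally show ?thesis .
qed

lemma cnj_ip:
  assumes "f \<in> l2" "g \<in> l2"
  shows "cnj (ip f g) = ip g f"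
  unfolding ip_def
  using bounded_linear.suminf[OF bounded_linear_cnj summable_mult_l2[OF assms]]
  by (simp add: mult.commute)

lemma ip_self:
  assumes "f \<in> l2"
  shows "ip f f = complex_of_real ((l2norm f)\<^sup>2)"
proof -
  have "ip f f = (\<Sum>n. complex_of_real ((cmod (f n))\<^sup>2))"
    unfolding ip_def by (simp only: complex_norm_square)
  also have "\<dots> = complex_of_real (\<Sum>n. (cmod (f n))\<^sup>2)"
    using assms unfolding l2_def by (simp add: suminf_of_real)
  finally show ?thesis
    using assms by (simp add: l2norm_def l2_def suminf_nonneg)
qed

lemma bounded_op_scale:
  assumes "bounded_op T" "f \<in> l2"
  shows "T (\<lambda>n. c * f n) = (\<lambda>n. c * T f n)"
proof -
  have "T (\<lambda>n. c * f n + 0 * f n) = (\<lambda>n. c * T f n + 0 * T f n)"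
    using assms unfolding bounded_op_def by blast
  then show ?thesis
    by simp
qed

lemma orth_proj_rank_one:
  assumes "x \<in> l2" "l2norm x = 1"
  shows "orth_proj (rank_one x)"
  unfolding orth_proj_def bounded_op_def
proof (intro conjI ballI allI)
  fix f g a b assume f: "f \<in> l2" and g: "g \<in> l2"
  show "rank_one x f \<in> l2"
    unfolding rank_one_def by (rule l2_scale[OF assms(1)])
  show "rank_one x (rank_one x f) = rank_one x f"
    unfolding rank_one_def using assms by (simp add: ip_scale_left ip_self)
  show "rank_one x (\<lambda>n. a * f n + b * g n) = (\<lambda>n. a * rank_one x f n + b * rank_one x g n)"
    unfolding rank_one_def using ip_linear_left[OF f g assms(1)] by (simp add: algebra_simps)
  have "ip f (rank_one x g) = cnj (ip (rank_one x g) f)"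
    unfolding rank_one_def using cnj_ip[OF l2_scale[OF assms(1)] f] by simp
  also have "\<dots> = cnj (ip g x) * cnj (ip x f)"
    unfolding rank_one_def using assms(1) f by (simp add: ip_scale_left)
  also have "\<dots> = ip (rank_one x f) g"
    unfolding rank_one_def using assms(1) f g by (simp add: ip_scale_left cnj_ip)
  finally show "ip (rank_one x f) g = ip f (rank_one x g)" ..
next
  show "\<exists>C. \<forall>f\<in>l2. l2norm (rank_one x f) \<le> C * l2norm f"
    unfolding rank_one_def using assms norm_ip_le[of _ x]
    by (intro exI[of _ 1]) (simp add: l2norm_scale)
qed

lemma rank_one_compress:
  assumes "bounded_op T" "x \<in> l2"
  shows "rank_one x (T (rank_one x f)) = (\<lambda>n. ip (T x) x * rank_one x f n)"
proof -
  have "T x \<in> l2"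
    using assms unfolding bounded_op_def by blast
  have "rank_one x (T (rank_one x f)) = (\<lambda>n. ip (\<lambda>n. ip f x * T x n) x * x n)"
    unfolding rank_one_def by (simp only: bounded_op_scale[OF assms])
  also have "\<dots> = (\<lambda>n. ip (T x) x * rank_one x f n)"
    unfolding rank_one_def using \<open>T x \<in> l2\<close> assms(2) by (simp add: ip_scale_left mult_ac)
  finally show ?thesis .
qed

lemma opnorm_scaled_rank_one:
  assumes "x \<in> l2" "l2norm x = 1"
  shows "opnorm (\<lambda>f n. c * rank_one x f n) = cmod c"
proof -
  have norms: "{l2norm (\<lambda>n. c * rank_one x f n) | f. f \<in> l2 \<and> l2norm f \<le> 1}
      = {cmod c * cmod (ip f x) | f. f \<in> l2 \<and> l2norm f \<le> 1}"
    unfolding rank_one_def using assms by (simp add: mult.assoc[symmetric] l2norm_scale norm_mult)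
  have "Sup {cmod c * cmod (ip f x) | f. f \<in> l2 \<and> l2norm f \<le> 1} = cmod c"
  proof (rule cSup_eq_maximum)
    show "cmod c \<in> {cmod c * cmod (ip f x) | f. f \<in> l2 \<and> l2norm f \<le> 1}"
      using assms by (auto simp: ip_self intro!: exI[of _ x])
  next
    fix y assume "y \<in> {cmod c * cmod (ip f x) | f. f \<in> l2 \<and> l2norm f \<le> 1}"
    then obtain f where "f \<in> l2" "l2norm f \<le> 1" "y = cmod c * cmod (ip f x)"
      by blast
    with norm_ip_le[of f x] assms show "y \<le> cmod c"
      by (simp add: mult_left_le)
  qed
  then show ?thesis
    unfolding opnorm_def norms .
qed

theorem proposition4p3:
  fixes E :: "real \<Rightarrow> op" and x :: vec
  assumes "spectral_resolution E"
    and "x \<in> l2" and "l2norm x = 1"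
  shows "x \<in> Hac E \<longleftrightarrow> norm_ac_proj E (rank_one x)"
proof -
  have bounded: "bounded_op (E t)" for t
    using assms(1) unfolding spectral_resolution_def orth_proj_def by blast
  have compression_increment:
    "(\<lambda>f n. rank_one x (E t (rank_one x f)) n - rank_one x (E s (rank_one x f)) n)
      = (\<lambda>f n. (ip (E t x) x - ip (E s x) x) * rank_one x f n)" for s t
    using assms(2) by (simp add: rank_one_compress[OF bounded] left_diff_distrib)
  have "opnorm (\<lambda>f n. rank_one x (E t (rank_one x f)) n - rank_one x (E s (rank_one x f)) n)
      = cmod (ip (E t x) x - ip (E s x) x)" for s t
    unfolding compression_increment using assms(2,3) by (rule opnorm_scaled_rank_one)
  then show ?thesis
    unfolding Hac_def norm_ac_proj_def using orth_proj_rank_one[OF assms(2,3)] assms(2) by simp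
qed

end
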